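(* Every set star Lindelöf space of cardinality less than $\mathfrak b$ is set star Hurewicz, and every set strongly star Lindelöf space of cardinality less than $\mathfrak b$ is set strongly star Hurewicz.
   Context: For a family $\mathcal U$ of subsets of $X$ and $A\subseteq X$, $st(A,\mathcal U)=\bigcup\{U\in\mathcal U: U\cap A\neq\emptyset\}$. $X$ is set star Lindelöf (resp. set strongly star Lindelöf) if for every nonempty $A\subseteq X$ and every family $\mathcal U$ of open sets with $\overline A\subseteq\bigcup\mathcal U$ there is a countable $\mathcal V\subseteq\mathcal U$ with $A\subseteq st(\bigcup\mathcal V,\mathcal U)$ (resp. a countable $F\subseteq\overline A$ with $A\subseteq st(F,\mathcal U)$). $X$ is set star Hurewicz (resp. set strongly star Hurewicz) if for every nonempty $A\subseteq X$ and every sequence $(\mathcal U_n:n\in\omega)$ of families of open sets with $\overline A\subseteq\bigcup\mathcal U_n$ for all $n$ there are finite $\mathcal V_n\subseteq\mathcal U_n$ (resp. finite $F_n\subseteq\overline A$) such that each $x\in A$ lies in $st(\bigcup\mathcal V_n,\mathcal U_n)$ (resp. $st(F_n,\mathcal U_n)$) for all but finitely many $n$. $\mathfrak b$ is the minimal cardinality of a subset of $\omega^\omega$ unbounded with respect to $\leq^*$ ($f\leq^*g$ iff $f(n)\leq g(n)$ for all but finitely many $n$). *)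

theory Defs
  imports "HOL-Analysis.Analysis"
begin

definition st :: "'a set \<Rightarrow> 'a set set \<Rightarrow> 'a set" where
  "st A \<U> = \<Union>{U \<in> \<U>. U \<inter> A \<noteq> {}}"

definition set_star_Lindelof :: "'a topology \<Rightarrow> bool" where
  "set_star_Lindelof X \<longleftrightarrow>
    (\<forall>A \<U>. A \<noteq> {} \<and> A \<subseteq> topspace X \<and> (\<forall>U\<in>\<U>. openin X U) \<and> X closure_of A \<subseteq> \<Union>\<U> \<longrightarrow>
      (\<exists>\<V>. countable \<V> \<and> \<V> \<subseteq> \<U> \<and> A \<subseteq> st (\<Union>\<V>) \<U>))"

definition set_strongly_star_Lindelof :: "'a topology \<Rightarrow> bool" where
  "set_strongly_star_Lindelof X \<longleftrightarrow>
    (\<forall>A \<U>. A \<noteq> {} \<and> A \<subseteq> topspace X \<and> (\<forall>U\<in>\<U>. openin X U) \<and> X closure_of A \<subseteq> \<Union>\<U> \<longrightarrow>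
      (\<exists>F. countable F \<and> F \<subseteq> X closure_of A \<and> A \<subseteq> st F \<U>))"

definition set_star_Hurewicz :: "'a topology \<Rightarrow> bool" where
  "set_star_Hurewicz X \<longleftrightarrow>
    (\<forall>A (\<U> :: nat \<Rightarrow> 'a set set). A \<noteq> {} \<and> A \<subseteq> topspace X \<and>
       (\<forall>n. (\<forall>U\<in>\<U> n. openin X U) \<and> X closure_of A \<subseteq> \<Union>(\<U> n)) \<longrightarrow>
      (\<exists>\<V> :: nat \<Rightarrow> 'a set set. (\<forall>n. finite (\<V> n) \<and> \<V> n \<subseteq> \<U> n) \<and>
         (\<forall>x\<in>A. \<forall>\<^sub>F n in sequentially. x \<in> st (\<Union>(\<V> n)) (\<U> n))))"

definition set_strongly_star_Hurewicz :: "'a topology \<Rightarrow> bool" where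
  "set_strongly_star_Hurewicz X \<longleftrightarrow>
    (\<forall>A (\<U> :: nat \<Rightarrow> 'a set set). A \<noteq> {} \<and> A \<subseteq> topspace X \<and>
       (\<forall>n. (\<forall>U\<in>\<U> n. openin X U) \<and> X closure_of A \<subseteq> \<Union>(\<U> n)) \<longrightarrow>
      (\<exists>F :: nat \<Rightarrow> 'a set. (\<forall>n. finite (F n) \<and> F n \<subseteq> X closure_of A) \<and>
         (\<forall>x\<in>A. \<forall>\<^sub>F n in sequentially. x \<in> st (F n) (\<U> n))))"

definition le_star :: "(nat \<Rightarrow> nat) \<Rightarrow> (nat \<Rightarrow> nat) \<Rightarrow> bool" where
  "le_star f g \<longleftrightarrow> (\<forall>\<^sub>F n in sequentially. f n \<le> g n)"

definition unbounded_family :: "(nat \<Rightarrow> nat) set \<Rightarrow> bool" where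
  "unbounded_family F \<longleftrightarrow> \<not> (\<exists>g. \<forall>f\<in>F. le_star f g)"

text \<open>A set S has cardinality less than \<open>\<bb>\<close> (the least cardinality of an unbounded
  family) iff it is strictly smaller in cardinality than every unbounded family.\<close>
definition card_less_b :: "'a set \<Rightarrow> bool" where
  "card_less_b S \<longleftrightarrow> (\<forall>F. unbounded_family F \<longrightarrow> ordLess2 (card_of S) (card_of F))"

end

theory Submission
  imports Defs
begin

text \<open>At every stage \<open>n\<close> the Lindelof property yields countably many witnesses (open
  sets, resp. points) whose stars cover \<open>A\<close>. Enumerate them and let \<open>f\<^sub>x(n)\<close> be the
  least \<open>k\<close> such that the witnesses with index at most \<open>k\<close> already cover \<open>x\<close>. There are
  fewer than \<open>\<bb>\<close> functions \<open>f\<^sub>x\<close>, so a single \<open>g\<close> eventually dominates all of them,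
  and the witnesses with index at most \<open>g(n)\<close> form the required finite selection.\<close>

lemma card_less_b_subset:
  assumes "card_less_b S" "A \<subseteq> S"
  shows "card_less_b A"
  using assms ordLeq_ordLess_trans card_of_mono1 unfolding card_less_b_def by blast

lemma card_less_b_bounded:
  assumes "card_less_b S"
  shows "\<exists>g. \<forall>x\<in>S. le_star (f x) g"
proof (rule ccontr)
  assume "\<not> ?thesis"
  then have "unbounded_family (f ` S)"
    unfolding unbounded_family_def by auto
  then have "ordLess2 (card_of S) (card_of (f ` S))"
    using assms card_less_b_def by blast
  then show False
    using card_of_image not_ordLess_ordLeq by blast
qed

lemma st_Union: "st (\<Union>\<V>) \<U> = (\<Union>V\<in>\<V>. st V \<U>)"
  by (auto simp: st_def)

lemma st_eq_UN_st_singleton: "st F \<U> = (\<Union>p\<in>F. st {p} \<U>)"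
  by (auto simp: st_def)

lemma countable_covers_eventually_finite_covers:
  fixes C :: "nat \<Rightarrow> 'b set" and R :: "nat \<Rightarrow> 'b \<Rightarrow> 'a set"
  assumes "card_less_b A"
    and countable: "\<And>n. countable (C n)"
    and cover: "\<And>n. A \<subseteq> (\<Union>c\<in>C n. R n c)"
  shows "\<exists>F. (\<forall>n. finite (F n) \<and> F n \<subseteq> C n) \<and>
             (\<forall>x\<in>A. \<forall>\<^sub>F n in sequentially. x \<in> (\<Union>c\<in>F n. R n c))"
proof -
  define I where "I n k = to_nat_on (C n) -` {..k} \<inter> C n" for n k
  have I_finite: "finite (I n k)" for n k
    unfolding I_def by (simp add: finite_vimage_IntI inj_on_to_nat_on countable)
  have I_subset: "I n k \<subseteq> C n" for n k
    unfolding I_def by blast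
  have I_mono: "I n k \<subseteq> I n l" if "k \<le> l" for n k l
    using that unfolding I_def by auto
  have I_exhausts: "\<exists>k. x \<in> (\<Union>c\<in>I n k. R n c)" if "x \<in> A" for x n
  proof -
    obtain c where "c \<in> C n" "x \<in> R n c"
      using cover \<open>x \<in> A\<close> by blast
    then have "x \<in> (\<Union>c\<in>I n (to_nat_on (C n) c). R n c)"
      unfolding I_def by blast
    then show ?thesis ..
  qed
  define f where "f x n = (LEAST k. x \<in> (\<Union>c\<in>I n k. R n c))" for x n
  obtain g where g: "\<forall>x\<in>A. le_star (f x) g"
    using card_less_b_bounded[OF \<open>card_less_b A\<close>] by blast
  have covered: "x \<in> (\<Union>c\<in>I n (g n). R n c)" if "x \<in> A" "f x n \<le> g n" for x n
  proof -
    have "x \<in> (\<Union>c\<in>I n (f x n). R n c)"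
      unfolding f_def using I_exhausts[OF \<open>x \<in> A\<close>] by (rule LeastI_ex)
    then show ?thesis
      using I_mono[OF \<open>f x n \<le> g n\<close>] by blast
  qed
  have eventually_covered: "\<forall>x\<in>A. \<forall>\<^sub>F n in sequentially. x \<in> (\<Union>c\<in>I n (g n). R n c)"
  proof
    fix x
    assume "x \<in> A"
    then have "\<forall>\<^sub>F n in sequentially. f x n \<le> g n"
      using g unfolding le_star_def by blast
    then show "\<forall>\<^sub>F n in sequentially. x \<in> (\<Union>c\<in>I n (g n). R n c)"
      by (rule eventually_mono) (use covered \<open>x \<in> A\<close> in blast)
  qed
  show ?thesis
  proof (intro exI conjI)
    show "\<forall>n. finite (I n (g n)) \<and> I n (g n) \<subseteq> C n"
      using I_finite I_subset by blast
    show "\<forall>x\<in>A. \<forall>\<^sub>F n in sequentially. x \<in> (\<Union>c\<in>I n (g n). R n c)"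
      by (fact eventually_covered)
  qed
qed

lemma set_star_LindelofD:
  assumes "set_star_Lindelof X" "A \<noteq> {}" "A \<subseteq> topspace X"
    "\<forall>U\<in>\<U>. openin X U" "X closure_of A \<subseteq> \<Union>\<U>"
  obtains \<V> where "countable \<V>" "\<V> \<subseteq> \<U>" "A \<subseteq> st (\<Union>\<V>) \<U>"
  using assms unfolding set_star_Lindelof_def by meson

lemma set_strongly_star_LindelofD:
  assumes "set_strongly_star_Lindelof X" "A \<noteq> {}" "A \<subseteq> topspace X"
    "\<forall>U\<in>\<U>. openin X U" "X closure_of A \<subseteq> \<Union>\<U>"
  obtains P where "countable P" "P \<subseteq> X closure_of A" "A \<subseteq> st P \<U>"
  using assms unfolding set_strongly_star_Lindelof_def by meson

lemma set_star_Lindelof_imp_set_star_Hurewicz: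
  assumes "card_less_b (topspace X)" "set_star_Lindelof X"
  shows "set_star_Hurewicz X"
  unfolding set_star_Hurewicz_def
proof (intro allI impI)
  fix A and \<U> :: "nat \<Rightarrow> 'a set set"
  assume A: "A \<noteq> {} \<and> A \<subseteq> topspace X \<and>
    (\<forall>n. (\<forall>U\<in>\<U> n. openin X U) \<and> X closure_of A \<subseteq> \<Union>(\<U> n))"
  have "\<exists>\<V>. countable \<V> \<and> \<V> \<subseteq> \<U> n \<and> A \<subseteq> st (\<Union>\<V>) (\<U> n)" for n
    by (rule set_star_LindelofD[OF assms(2), of A "\<U> n"]) (use A in blast)+
  then obtain \<V> where \<V>: "\<And>n. countable (\<V> n) \<and> \<V> n \<subseteq> \<U> n \<and> A \<subseteq> st (\<Union>(\<V> n)) (\<U> n)"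
    by metis
  have "card_less_b A"
    using card_less_b_subset assms(1) A by blast
  have countable: "countable (\<V> n)" for n
    using \<V> by blast
  have cover: "A \<subseteq> (\<Union>V\<in>\<V> n. st V (\<U> n))" for n
    using \<V> by (simp add: st_Union)
  obtain \<W> where \<W>: "\<forall>n. finite (\<W> n) \<and> \<W> n \<subseteq> \<V> n"
      and eventually: "\<forall>x\<in>A. \<forall>\<^sub>F n in sequentially. x \<in> (\<Union>V\<in>\<W> n. st V (\<U> n))"
    using countable_covers_eventually_finite_covers[of A \<V> "\<lambda>n V. st V (\<U> n)"]
      \<open>card_less_b A\<close> countable cover by blast
  show "\<exists>\<W>. (\<forall>n. finite (\<W> n) \<and> \<W> n \<subseteq> \<U> n) \<and>
      (\<forall>x\<in>A. \<forall>\<^sub>F n in sequentially. x \<in> st (\<Union>(\<W> n)) (\<U> n))"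
  proof (intro exI conjI)
    show "\<forall>n. finite (\<W> n) \<and> \<W> n \<subseteq> \<U> n"
      using \<W> \<V> by blast
    show "\<forall>x\<in>A. \<forall>\<^sub>F n in sequentially. x \<in> st (\<Union>(\<W> n)) (\<U> n)"
      using eventually by (simp add: st_Union)
  qed
qed

lemma set_strongly_star_Lindelof_imp_set_strongly_star_Hurewicz:
  assumes "card_less_b (topspace X)" "set_strongly_star_Lindelof X"
  shows "set_strongly_star_Hurewicz X"
  unfolding set_strongly_star_Hurewicz_def
proof (intro allI impI)
  fix A and \<U> :: "nat \<Rightarrow> 'a set set"
  assume A: "A \<noteq> {} \<and> A \<subseteq> topspace X \<and>
    (\<forall>n. (\<forall>U\<in>\<U> n. openin X U) \<and> X closure_of A \<subseteq> \<Union>(\<U> n))"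
  have "\<exists>P. countable P \<and> P \<subseteq> X closure_of A \<and> A \<subseteq> st P (\<U> n)" for n
    by (rule set_strongly_star_LindelofD[OF assms(2), of A "\<U> n"]) (use A in blast)+
  then obtain P where P: "\<And>n. countable (P n) \<and> P n \<subseteq> X closure_of A \<and> A \<subseteq> st (P n) (\<U> n)"
    by metis
  have "card_less_b A"
    using card_less_b_subset assms(1) A by blast
  have countable: "countable (P n)" for n
    using P by blast
  have cover: "A \<subseteq> (\<Union>p\<in>P n. st {p} (\<U> n))" for n
    using P by (simp flip: st_eq_UN_st_singleton)
  obtain F where F: "\<forall>n. finite (F n) \<and> F n \<subseteq> P n"
      and eventually: "\<forall>x\<in>A. \<forall>\<^sub>F n in sequentially. x \<in> (\<Union>p\<in>F n. st {p} (\<U> n))"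
    using countable_covers_eventually_finite_covers[of A P "\<lambda>n p. st {p} (\<U> n)"]
      \<open>card_less_b A\<close> countable cover by blast
  show "\<exists>F. (\<forall>n. finite (F n) \<and> F n \<subseteq> X closure_of A) \<and>
      (\<forall>x\<in>A. \<forall>\<^sub>F n in sequentially. x \<in> st (F n) (\<U> n))"
  proof (intro exI conjI)
    show "\<forall>n. finite (F n) \<and> F n \<subseteq> X closure_of A"
      using F P by blast
    show "\<forall>x\<in>A. \<forall>\<^sub>F n in sequentially. x \<in> st (F n) (\<U> n)"
      using eventually by (simp flip: st_eq_UN_st_singleton)
  qed
qed

theorem proposition4p3:
  fixes X :: "'a topology"
  assumes "card_less_b (topspace X)"
  shows "(set_star_Lindelof X \<longrightarrow> set_star_Hurewicz X) \<and>
         (set_strongly_star_Lindelof X \<longrightarrow> set_strongly_star_Hurewicz X)"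
  using assms set_star_Lindelof_imp_set_star_Hurewicz
    set_strongly_star_Lindelof_imp_set_strongly_star_Hurewicz by blast

end
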